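(* Assume complete resource pooling. The normalizing constant $B$ of the stationary distributions of the detailed FCFS matching chains is given by $$B=\Big(\prod_{j=1}^J\beta_{s_j}\sum_{(S_1,\ldots,S_J)\in\mathcal{P}_J}\prod_{\ell=1}^{J-1}\big(\beta_{\{S_1,\ldots,S_\ell\}}-\alpha_{\mathcal{U}(\{S_1,\ldots,S_\ell\})}\big)^{-1}\Big)^{-1}=\Big(\prod_{i=1}^I\alpha_{c_i}\sum_{(C_1,\ldots,C_I)\in\mathcal{P}_I}\prod_{\ell=1}^{I-1}\big(\beta_{\mathcal{S}(\{C_1,\ldots,C_\ell\})}-\alpha_{\{C_1,\ldots,C_\ell\}}\big)^{-1}\Big)^{-1},$$ where $\mathcal{P}_J$ is the set of all orderings of $s_1,\ldots,s_J$ and $\mathcal{P}_I$ the set of all orderings of $c_1,\ldots,c_I$.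
   Context: Setting: finite type sets $\mathcal{C}=\{c_1,\ldots,c_I\}$, $\mathcal{S}=\{s_1,\ldots,s_J\}$, connected bipartite compatibility graph $G=(\mathcal{C},\mathcal{S},\mathcal{E})$, independent i.i.d. sequences $(c^m)_{m\in\mathbb{Z}}\sim\alpha$, $(s^n)_{n\in\mathbb{Z}}\sim\beta$, all probabilities positive. $\mathcal{S}(C)$ = server types compatible with some type in $C$; $\mathcal{C}(S)$ = customer types compatible with some type in $S$; $\mathcal{U}(S)=\mathcal{C}\setminus\mathcal{C}(\mathcal{S}\setminus S)$; $\alpha_C,\beta_S$ are sums of probabilities. Complete resource pooling: $\beta_S>\alpha_{\mathcal{U}(S)}$ for all nonempty proper $S\subsetneq\mathcal{S}$. Let $A$ be the a.s. unique (perfect) FCFS matching over $\mathbb{Z}$ (for each $(m,n)\in A$, every compatible $s^l$, $l<n$, is matched to some $c^k$, $k<m$, and every compatible $c^k$, $k<m$, to some $s^l$, $l<n$); set $\tilde{s}^m=s^n$ for $(m,n)\in A$. The server-by-server detailed chain $Z^s_N$: on the customer line position $m$ holds $\tilde{s}^m$ if $c^m$ is matched to a server of index $\le N$, else $c^m$; $Z^s_N$ is the word from the first position holding an unmatched customer to the last position holding an exchanged server (empty if the latter precedes the former). Its stationary distribution is $\pi_{Z^s}(\mathfrak{z})=B\prod_i\alpha_{c_i}^{\#c_i}\prod_j\beta_{s_j}^{\#s_j}$ ($\#$ counting types in $\mathfrak{z}$), and $B$ denotes this normalizing constant. *)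

theory Defs
  imports "HOL-Analysis.Analysis"
begin

text \<open>Customer types are the elements of a finite type 'c, server types the elements
  of a finite type 's; the compatibility graph is given by E :: 'c => 's => bool.\<close>

definition srv_of :: "('c \<Rightarrow> 's \<Rightarrow> bool) \<Rightarrow> 'c set \<Rightarrow> 's set" where
  "srv_of E C = {s. \<exists>c\<in>C. E c s}"

definition cst_of :: "('c \<Rightarrow> 's \<Rightarrow> bool) \<Rightarrow> 's set \<Rightarrow> 'c set" where
  "cst_of E S = {c. \<exists>s\<in>S. E c s}"

text \<open>U(S) = C \ C(S \ S): customer types compatible only with server types in S.\<close>
definition only_cst :: "('c \<Rightarrow> 's \<Rightarrow> bool) \<Rightarrow> 's set \<Rightarrow> 'c set" where
  "only_cst E S = UNIV - cst_of E (UNIV - S)"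

definition bip_edges :: "('c \<Rightarrow> 's \<Rightarrow> bool) \<Rightarrow> (('c + 's) \<times> ('c + 's)) set" where
  "bip_edges E = {(Inl c, Inr s) | c s. E c s} \<union> {(Inr s, Inl c) | c s. E c s}"

definition bip_connected :: "('c \<Rightarrow> 's \<Rightarrow> bool) \<Rightarrow> bool" where
  "bip_connected E \<longleftrightarrow> (\<forall>u v. (u, v) \<in> (bip_edges E)\<^sup>*)"

definition complete_resource_pooling ::
  "('c \<Rightarrow> 's \<Rightarrow> bool) \<Rightarrow> ('c \<Rightarrow> real) \<Rightarrow> ('s \<Rightarrow> real) \<Rightarrow> bool" where
  "complete_resource_pooling E \<alpha> \<beta> \<longleftrightarrow>
     (\<forall>S. S \<noteq> {} \<and> S \<noteq> UNIV \<longrightarrow> sum \<beta> S > sum \<alpha> (only_cst E S))"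

text \<open>State space of the server-by-server detailed FCFS chain: words over customer
  letters (Inl) and server letters (Inr).\<close>
definition detailed_states :: "('c \<Rightarrow> 's \<Rightarrow> bool) \<Rightarrow> ('c + 's) list set" where
  "detailed_states E = {z. z = [] \<or>
     (isl (hd z) \<and> \<not> isl (last z) \<and>
      (\<forall>k l. k < l \<and> l < length z \<longrightarrow>
         (case (z ! k, z ! l) of (Inl c, Inr s) \<Rightarrow> \<not> E c s | _ \<Rightarrow> True)))}"

definition word_weight :: "('c \<Rightarrow> real) \<Rightarrow> ('s \<Rightarrow> real) \<Rightarrow> ('c + 's) list \<Rightarrow> real" where
  "word_weight \<alpha> \<beta> z = prod_list (map (case_sum \<alpha> \<beta>) z)"

text \<open>The normalizing constant B of pi(z) = B * word_weight z.\<close>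
definition norm_const ::
  "('c \<Rightarrow> 's \<Rightarrow> bool) \<Rightarrow> ('c \<Rightarrow> real) \<Rightarrow> ('s \<Rightarrow> real) \<Rightarrow> real" where
  "norm_const E \<alpha> \<beta> = inverse (infsum (word_weight \<alpha> \<beta>) (detailed_states E))"

definition orderings :: "'a::finite list set" where
  "orderings = {xs. distinct xs \<and> set xs = UNIV}"

end

theory Submission
  imports Defs
begin

text \<open>After its first letter, a nonempty state is a word that ends in a server and in which
  every server is incompatible with all customers before it, the first customer included. If C is
  the set of customer types seen so far, such a word is either a word over the letters that leave
  this constraint unchanged (customers in C, servers outside S(C)) ending in a server, or such a
  word followed by a customer of a new type d and a word of the same kind for C \<union> {d}. Words over
  those letters have total weight 1 / (\<beta>(S(C)) - \<alpha>(C)), a geometric series, so the total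
  weights satisfy a recursion in C which is solved by a sum over the orderings of the customer
  types outside C; complete resource pooling makes every denominator positive. Reversing words and
  exchanging customer and server letters maps the states for the graph onto those for the
  transposed graph, which gives the formula over orderings of server types.\<close>

section \<open>Sums of nonnegative families\<close>

lemma has_sum_Sigma_nonneg:
  fixes f :: "'a \<times> 'b \<Rightarrow> real"
  assumes "\<And>x. x \<in> A \<Longrightarrow> ((\<lambda>y. f (x, y)) has_sum g x) (B x)"
    and "(g has_sum S) A"
    and "\<And>x y. x \<in> A \<Longrightarrow> y \<in> B x \<Longrightarrow> f (x, y) \<ge> 0"
  shows "(f has_sum S) (Sigma A B)"
  using assms by (intro has_sum_SigmaI summable_on_SigmaI[where g = g]) (auto intro: has_sum_imp_summable)

lemma has_sum_UN_disjoint_nonneg: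
  fixes f :: "'b \<Rightarrow> real"
  assumes "\<And>x. x \<in> A \<Longrightarrow> (f has_sum g x) (B x)"
    and "(g has_sum S) A"
    and "\<And>x y. x \<in> A \<Longrightarrow> y \<in> B x \<Longrightarrow> f y \<ge> 0"
    and "disjoint_family_on B A"
  shows "(f has_sum S) (\<Union>x\<in>A. B x)"
proof -
  have "((f \<circ> snd) has_sum S) (Sigma A B)"
    using assms by (intro has_sum_Sigma_nonneg[where g = g]) auto
  moreover have "inj_on snd (Sigma A B)"
    using assms(4) by (force simp: disjoint_family_on_def inj_on_def)
  moreover have "snd ` Sigma A B = (\<Union>x\<in>A. B x)" by force
  ultimately show ?thesis by (metis has_sum_reindex)
qed

lemma sum_prod_list_lists_length:
  fixes w :: "'a \<Rightarrow> 'b::comm_semiring_1"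
  shows "(\<Sum>u\<in>{u. set u \<subseteq> A \<and> length u = n}. prod_list (map w u)) = sum w A ^ n"
proof (induction n)
  case 0
  have "{u. set u \<subseteq> A \<and> length u = 0} = {[]}" by auto
  then show ?case by simp
next
  case (Suc n)
  define L where "L n = {u. set u \<subseteq> A \<and> length u = n}" for n
  have "L (Suc n) = (\<lambda>(a, u). a # u) ` (A \<times> L n)"
    unfolding L_def by (auto simp: length_Suc_conv image_iff)
  moreover have "inj_on (\<lambda>(a, u). a # u) (A \<times> L n)" by (auto simp: inj_on_def)
  ultimately have "(\<Sum>u\<in>L (Suc n). prod_list (map w u)) = (\<Sum>(a, u)\<in>A \<times> L n. w a * prod_list (map w u))"
    by (simp add: sum.reindex case_prod_unfold)
  also have "\<dots> = sum w A * (\<Sum>u\<in>L n. prod_list (map w u))"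
    by (simp add: sum_product sum.cartesian_product)
  finally show ?case using Suc by (simp add: L_def)
qed

lemma has_sum_prod_list_lists:
  fixes w :: "'a \<Rightarrow> real"
  assumes "finite A" and "\<And>a. a \<in> A \<Longrightarrow> w a \<ge> 0" and "sum w A < 1"
  shows "((\<lambda>u. prod_list (map w u)) has_sum (1 / (1 - sum w A))) (lists A)"
proof -
  let ?L = "\<lambda>n. {u. set u \<subseteq> A \<and> length u = n}"
  have "((\<lambda>n. sum w A ^ n) has_sum (1 / (1 - sum w A))) UNIV"
    using assms geometric_sums[of "sum w A"] by (intro sums_nonneg_imp_has_sum) (auto simp: sum_nonneg)
  then have "((\<lambda>u. prod_list (map w u)) has_sum (1 / (1 - sum w A))) (\<Union>n. ?L n)"
  proof (rule has_sum_UN_disjoint_nonneg[rotated])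
    show "((\<lambda>u. prod_list (map w u)) has_sum sum w A ^ n) (?L n)" for n
      using finite_lists_length_eq[OF assms(1)]
      by (simp add: has_sum_finite flip: sum_prod_list_lists_length)
    show "0 \<le> prod_list (map w u)" if "u \<in> ?L n" for n u
      using that assms(2) by (intro prod_list_nonneg) fastforce
  qed (auto simp: disjoint_family_on_def)
  moreover have "(\<Union>n. ?L n) = lists A" by auto
  ultimately show ?thesis by simp
qed

lemma sum_Compl_eq:
  fixes \<gamma> :: "'a::finite \<Rightarrow> real"
  assumes "sum \<gamma> UNIV = 1"
  shows "sum \<gamma> (- A) = 1 - sum \<gamma> A"
  using sum.union_disjoint[of A "- A" \<gamma>] assms by simp

lemma append_eq_append_lists:
  assumes "u \<in> lists A" "u' \<in> lists A" "v \<noteq> []" "hd v \<notin> A" "v' \<noteq> []" "hd v' \<notin> A"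
    and "u @ v = u' @ v'"
  shows "u = u'"
  using assms
proof (induction u arbitrary: u')
  case Nil
  then show ?case by (cases u') auto
next
  case (Cons x u)
  then show ?case by (cases u') auto
qed

lemma inj_on_append_lists:
  assumes "\<And>v. v \<in> V \<Longrightarrow> v \<noteq> [] \<and> hd v \<notin> A"
  shows "inj_on (\<lambda>(u, v). u @ v) (lists A \<times> V)"
proof (rule inj_onI)
  fix x y assume "x \<in> lists A \<times> V" "y \<in> lists A \<times> V" "(\<lambda>(u, v). u @ v) x = (\<lambda>(u, v). u @ v) y"
  then obtain u v u' v' where "x = (u, v)" "y = (u', v')" "u \<in> lists A" "u' \<in> lists A"
    "v \<in> V" "v' \<in> V" "u @ v = u' @ v'" by auto
  with assms append_eq_append_lists[of u A u' v v'] show "x = y" by auto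
qed

lemma inj_on_append_same_length:
  assumes "\<And>v. v \<in> V \<Longrightarrow> length v = n"
  shows "inj_on (\<lambda>(u, v). u @ v) (U \<times> V)"
  using assms by (auto simp: inj_on_def)

section \<open>Orderings\<close>

definition compl_orderings :: "'a::finite set \<Rightarrow> 'a list set" where
  "compl_orderings C = {xs. distinct xs \<and> set xs = - C}"

lemma orderings_eq_compl_orderings: "orderings = compl_orderings {}"
  by (simp add: orderings_def compl_orderings_def)

lemma compl_orderings_UNIV: "compl_orderings UNIV = {[]}"
  by (auto simp: compl_orderings_def)

lemma length_compl_orderings: "xs \<in> compl_orderings C \<Longrightarrow> length xs = card (- C)"
  using distinct_card[of xs] by (auto simp: compl_orderings_def)

lemma finite_compl_orderings: "finite (compl_orderings C)"
proof (rule finite_subset)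
  show "compl_orderings C \<subseteq> {xs. set xs \<subseteq> UNIV \<and> length xs = card (- C)}"
    using length_compl_orderings by blast
qed (rule finite_lists_length_eq, simp)

lemma compl_orderings_eq_Cons:
  assumes "C \<noteq> UNIV"
  shows "compl_orderings C = (\<lambda>(d, ys). d # ys) ` Sigma (- C) (\<lambda>d. compl_orderings (insert d C))"
proof (intro equalityI subsetI)
  fix xs assume xs: "xs \<in> compl_orderings C"
  then have "xs \<noteq> []" using assms unfolding compl_orderings_def by auto
  then obtain d ys where "xs = d # ys" by (cases xs) auto
  with xs show "xs \<in> (\<lambda>(d, ys). d # ys) ` Sigma (- C) (\<lambda>d. compl_orderings (insert d C))"
    unfolding compl_orderings_def by (intro image_eqI[where x = "(d, ys)"]) auto
next
  fix xs assume "xs \<in> (\<lambda>(d, ys). d # ys) ` Sigma (- C) (\<lambda>d. compl_orderings (insert d C))"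
  then obtain d ys where xs: "xs = d # ys" "d \<notin> C" "distinct ys" "set ys = - insert d C"
    unfolding compl_orderings_def by auto
  then have "d \<notin> set ys" by auto
  moreover have "set (d # ys) = - C" using xs by auto
  ultimately show "xs \<in> compl_orderings C" using xs unfolding compl_orderings_def by simp
qed

lemma sum_compl_orderings_Cons:
  assumes "C \<noteq> UNIV"
  shows "(\<Sum>xs\<in>compl_orderings C. g xs) = (\<Sum>d\<in>- C. \<Sum>ys\<in>compl_orderings (insert d C). g (d # ys))"
proof -
  have "inj_on (\<lambda>(d, ys). d # ys) (Sigma (- C) (\<lambda>d. compl_orderings (insert d C)))"
    by (auto simp: inj_on_def)
  then have "(\<Sum>xs\<in>compl_orderings C. g xs) = (\<Sum>(d, ys)\<in>Sigma (- C) (\<lambda>d. compl_orderings (insert d C)). g (d # ys))"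
    unfolding compl_orderings_eq_Cons[OF assms] by (subst sum.reindex) (simp_all add: case_prod_unfold)
  also have "\<dots> = (\<Sum>d\<in>- C. \<Sum>ys\<in>compl_orderings (insert d C). g (d # ys))"
    by (rule sum.Sigma[symmetric]) (simp_all add: finite_compl_orderings)
  finally show ?thesis .
qed

lemma prod_prefixes_Cons:
  "(\<Prod>l<length (d # ys). f (C \<union> set (take l (d # ys))))
     = f C * (\<Prod>l<length ys. f (insert d C \<union> set (take l ys)))"
  unfolding length_Cons prod.lessThan_Suc_shift by simp

lemma set_drop_eq_compl_take:
  assumes "distinct xs" "set xs = UNIV"
  shows "set (drop m xs) = - set (take m xs)"
proof -
  have "distinct (take m xs @ drop m xs)" using assms(1) by simp
  then have "set (take m xs) \<inter> set (drop m xs) = {}" by (simp only: distinct_append)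
  moreover have "set (take m xs @ drop m xs) = UNIV" using assms(2) by simp
  then have "set (take m xs) \<union> set (drop m xs) = UNIV" by (simp only: set_append)
  ultimately show ?thesis by blast
qed

lemma set_take_rev_ordering:
  assumes "xs \<in> orderings"
  shows "set (take l (rev xs)) = - set (take (CARD('a::finite) - l) (xs :: 'a list))"
proof -
  have xs: "distinct xs" "set xs = UNIV" "length xs = CARD('a)"
    using assms distinct_card[of xs] by (auto simp: orderings_def)
  have "set (take l (rev xs)) = set (drop (CARD('a) - l) xs)"
    using xs(3) by (simp add: take_rev)
  also have "\<dots> = - set (take (CARD('a) - l) xs)"
    using xs(1,2) by (rule set_drop_eq_compl_take)
  finally show ?thesis .
qed

lemma prod_reflect_atLeastLessThan:
  "(\<Prod>l\<in>{1..<n}. g (n - l)) = (\<Prod>l\<in>{1..<n::nat}. (g l :: 'b::comm_monoid_mult))"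
  by (rule prod.reindex_bij_witness[where i = "\<lambda>l. n - l" and j = "\<lambda>l. n - l"]) auto

lemma sum_orderings_compl_prefixes:
  "(\<Sum>xs\<in>orderings. \<Prod>l\<in>{1..<CARD('a::finite)}. f (- set (take l (xs :: 'a list))))
     = (\<Sum>xs\<in>orderings. \<Prod>l\<in>{1..<CARD('a)}. f (set (take l xs)))"
proof (rule sum.reindex_bij_witness[where i = rev and j = rev])
  fix xs :: "'a list" assume xs: "xs \<in> orderings"
  show "(\<Prod>l\<in>{1..<CARD('a)}. f (set (take l (rev xs)))) = (\<Prod>l\<in>{1..<CARD('a)}. f (- set (take l xs)))"
    unfolding set_take_rev_ordering[OF xs]
    by (rule prod_reflect_atLeastLessThan[where g = "\<lambda>m. f (- set (take m xs))"])
qed (simp_all add: orderings_def)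

lemma sum_orderings_Cons:
  "(\<Sum>xs\<in>orderings. \<Prod>l\<in>{1..<CARD('a::finite)}. f (set (take l xs)))
     = (\<Sum>c\<in>UNIV. \<Sum>ys\<in>compl_orderings {c}. \<Prod>l<length ys. f (insert c (set (take l (ys :: 'a list)))))"
proof -
  have "(\<Sum>xs\<in>orderings. \<Prod>l\<in>{1..<CARD('a)}. f (set (take l xs)))
      = (\<Sum>c\<in>- {}. \<Sum>ys\<in>compl_orderings (insert c {}). \<Prod>l\<in>{1..<CARD('a)}. f (set (take l (c # ys))))"
    unfolding orderings_eq_compl_orderings by (rule sum_compl_orderings_Cons) simp
  also have "\<dots> = (\<Sum>c\<in>UNIV. \<Sum>ys\<in>compl_orderings {c}. \<Prod>l<length ys. f (insert c (set (take l ys))))"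
  proof (intro sum.cong refl)
    fix c :: 'a and ys assume "ys \<in> compl_orderings (insert c {})"
    then have "CARD('a) = Suc (length ys)"
      using length_compl_orderings[of ys] card_Diff_singleton[of c UNIV] finite_UNIV_card_ge_0[where 'a = 'a]
      by (simp add: Compl_eq_Diff_UNIV)
    then show "(\<Prod>l\<in>{1..<CARD('a)}. f (set (take l (c # ys)))) = (\<Prod>l<length ys. f (insert c (set (take l ys))))"
      by (simp only: One_nat_def prod.shift_bounds_Suc_ivl atLeast0LessThan) simp
  qed simp
  finally show ?thesis by simp
qed

section \<open>Admissible words\<close>

fun admissible :: "('c \<Rightarrow> 's \<Rightarrow> bool) \<Rightarrow> 'c set \<Rightarrow> ('c + 's) list \<Rightarrow> bool" where
  "admissible E C [] = True"
| "admissible E C (Inl c # w) = admissible E (insert c C) w"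
| "admissible E C (Inr s # w) = (s \<notin> srv_of E C \<and> admissible E C w)"

fun may_precede :: "('c \<Rightarrow> 's \<Rightarrow> bool) \<Rightarrow> 'c + 's \<Rightarrow> 'c + 's \<Rightarrow> bool" where
  "may_precede E (Inl c) (Inr s) \<longleftrightarrow> \<not> E c s"
| "may_precede E _ _ \<longleftrightarrow> True"

lemma may_precede_Inl_iff: "may_precede E (Inl c) y \<longleftrightarrow> (\<forall>s. y = Inr s \<longrightarrow> \<not> E c s)"
  by (cases y) auto

definition tail_words :: "('c \<Rightarrow> 's \<Rightarrow> bool) \<Rightarrow> 'c set \<Rightarrow> ('c + 's) list set" where
  "tail_words E C = {w. w \<noteq> [] \<and> \<not> isl (last w) \<and> admissible E C w}"

definition free_letters :: "('c \<Rightarrow> 's \<Rightarrow> bool) \<Rightarrow> 'c set \<Rightarrow> ('c + 's) set" where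
  "free_letters E C = Inl ` C \<union> Inr ` (- srv_of E C)"

lemma detailed_states_sorted_wrt:
  "detailed_states E = {z. z = [] \<or> (isl (hd z) \<and> \<not> isl (last z) \<and> sorted_wrt (may_precede E) z)}"
proof -
  have "may_precede E x y \<longleftrightarrow> (case (x, y) of (Inl c, Inr s) \<Rightarrow> \<not> E c s | _ \<Rightarrow> True)" for x y
    by (cases x; cases y) auto
  then show ?thesis unfolding detailed_states_def sorted_wrt_iff_nth_less by fastforce
qed

lemma admissible_iff:
  "admissible E C w \<longleftrightarrow> (\<forall>s. Inr s \<in> set w \<longrightarrow> s \<notin> srv_of E C) \<and> sorted_wrt (may_precede E) w"
proof (induction w arbitrary: C)
  case (Cons x w)
  show ?case
  proof (cases x)
    case (Inl c)
    then show ?thesis using Cons.IH by (auto simp: srv_of_def may_precede_Inl_iff)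
  next
    case (Inr s)
    then show ?thesis using Cons.IH by auto
  qed
qed simp

lemma detailed_states_admissible:
  "detailed_states E = {z. z = [] \<or> (isl (hd z) \<and> \<not> isl (last z) \<and> admissible E {} z)}"
  by (simp add: detailed_states_sorted_wrt admissible_iff srv_of_def)

lemma detailed_states_eq_Cons_tail_words:
  "detailed_states E = insert [] ((\<lambda>(c, w). Inl c # w) ` Sigma UNIV (\<lambda>c. tail_words E {c}))"
proof (intro equalityI subsetI)
  fix z assume z: "z \<in> detailed_states E"
  show "z \<in> insert [] ((\<lambda>(c, w). Inl c # w) ` Sigma UNIV (\<lambda>c. tail_words E {c}))"
  proof (cases z)
    case (Cons x w)
    with z obtain c where "x = Inl c"
      by (cases x) (auto simp: detailed_states_admissible)
    with z Cons have "w \<in> tail_words E {c}"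
      by (auto simp: detailed_states_admissible tail_words_def split: if_splits)
    with Cons \<open>x = Inl c\<close> show ?thesis by (intro insertI2 image_eqI[where x = "(c, w)"]) auto
  qed simp
next
  fix z assume "z \<in> insert [] ((\<lambda>(c, w). Inl c # w) ` Sigma UNIV (\<lambda>c. tail_words E {c}))"
  then show "z \<in> detailed_states E"
    by (auto simp: detailed_states_admissible tail_words_def)
qed

lemma admissible_append_free:
  "u \<in> lists (free_letters E C) \<Longrightarrow> admissible E C (u @ w) = admissible E C w"
proof (induction u)
  case (Cons x u)
  then show ?case
    by (cases x) (auto simp: free_letters_def insert_absorb)
qed simp

lemma tail_words_UNIV:
  assumes "srv_of E UNIV = UNIV"
  shows "tail_words E UNIV = {}"
proof -
  have "False" if "w \<in> tail_words E UNIV" for w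
  proof -
    from that obtain s where "Inr s \<in> set w" "admissible E UNIV w"
      by (cases "last w") (auto simp: tail_words_def dest: last_in_set)
    with assms show False by (auto simp: admissible_iff)
  qed
  then show ?thesis by blast
qed

lemma tail_words_decomp:
  "tail_words E C =
     (\<lambda>(u, v). u @ v) ` (lists (free_letters E C) \<times> (\<lambda>s. [Inr s]) ` (- srv_of E C)) \<union>
     (\<lambda>(u, v). u @ v) ` (lists (free_letters E C) \<times>
        (\<lambda>(d, w). Inl d # w) ` Sigma (- C) (\<lambda>d. tail_words E (insert d C)))"
  (is "_ = ?ends \<union> ?branches")
proof (intro equalityI subsetI)
  fix z assume z: "z \<in> tail_words E C"
  define u where "u = takeWhile (\<lambda>x. x \<in> free_letters E C) z"
  define r where "r = dropWhile (\<lambda>x. x \<in> free_letters E C) z"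
  have zur: "z = u @ r" and u: "u \<in> lists (free_letters E C)"
    unfolding u_def r_def by (auto dest: set_takeWhileD)
  show "z \<in> ?ends \<union> ?branches"
  proof (cases r)
    case Nil
    from z have "z \<noteq> []" "\<not> isl (last z)" by (auto simp: tail_words_def)
    then obtain s where s: "last z = Inr s" by (cases "last z") auto
    have free: "z \<in> lists (free_letters E C)" using zur u Nil by simp
    have "z = butlast z @ [Inr s]" using \<open>z \<noteq> []\<close> s by (metis append_butlast_last_id)
    moreover have "butlast z \<in> lists (free_letters E C)"
      using free by (auto dest: in_set_butlastD)
    moreover have "Inr s \<in> free_letters E C"
      using free \<open>z \<noteq> []\<close> s by (metis in_listsD last_in_set)
    ultimately have "z \<in> ?ends"
      by (intro image_eqI[where x = "(butlast z, [Inr s])"]) (auto simp: free_letters_def)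
    then show ?thesis ..
  next
    case (Cons x w)
    have x: "x \<notin> free_letters E C"
      using Cons unfolding r_def by (metis dropWhile_eq_Cons_conv)
    have adm: "admissible E C (x # w)"
      using z zur Cons u by (simp add: tail_words_def admissible_append_free)
    then obtain d where d: "x = Inl d" "d \<notin> C"
      using x by (cases x) (auto simp: free_letters_def)
    with z zur Cons adm have "w \<in> tail_words E (insert d C)"
      by (auto simp: tail_words_def split: if_splits)
    with zur Cons d u have "z \<in> ?branches"
      by (intro image_eqI[where x = "(u, Inl d # w)"]) auto
    then show ?thesis ..
  qed
next
  fix z assume "z \<in> ?ends \<union> ?branches"
  then show "z \<in> tail_words E C"
    by (elim UnE imageE; clarsimp simp: tail_words_def admissible_append_free[OF in_listsI])
qed

lemma word_weight_Nil [simp]: "word_weight \<alpha> \<beta> [] = 1"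
  and word_weight_Cons [simp]: "word_weight \<alpha> \<beta> (x # z) = case_sum \<alpha> \<beta> x * word_weight \<alpha> \<beta> z"
  and word_weight_append: "word_weight \<alpha> \<beta> (u @ v) = word_weight \<alpha> \<beta> u * word_weight \<alpha> \<beta> v"
  by (simp_all add: word_weight_def)

lemma word_weight_nonneg:
  assumes "\<And>c. \<alpha> c \<ge> 0" "\<And>s. \<beta> s \<ge> 0"
  shows "word_weight \<alpha> \<beta> z \<ge> 0"
  unfolding word_weight_def using assms by (intro prod_list_nonneg) (auto split: sum.splits)

lemma has_sum_word_weight_append:
  assumes nonneg: "\<And>c. \<alpha> c \<ge> 0" "\<And>s. \<beta> s \<ge> 0"
    and U: "(word_weight \<alpha> \<beta> has_sum a) U" and V: "(word_weight \<alpha> \<beta> has_sum b) V"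
    and inj: "inj_on (\<lambda>(u, v). u @ v) (U \<times> V)"
  shows "(word_weight \<alpha> \<beta> has_sum a * b) ((\<lambda>(u, v). u @ v) ` (U \<times> V))"
proof -
  have "((\<lambda>(u, v). word_weight \<alpha> \<beta> u * word_weight \<alpha> \<beta> v) has_sum a * b) (U \<times> V)"
  proof (rule has_sum_Sigma_nonneg[where g = "\<lambda>u. word_weight \<alpha> \<beta> u * b"])
    show "((\<lambda>u. word_weight \<alpha> \<beta> u * b) has_sum a * b) U"
      using has_sum_cmult_left[OF U] .
  qed (use has_sum_cmult_right[OF V] word_weight_nonneg[of \<alpha> \<beta>] nonneg in auto)
  then show ?thesis
    by (subst has_sum_reindex[OF inj]) (simp add: o_def case_prod_unfold word_weight_append)
qed

lemma has_sum_word_weight_Inl_Cons: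
  assumes nonneg: "\<And>c. \<alpha> c \<ge> 0" "\<And>s. \<beta> s \<ge> 0"
    and "finite D" and W: "\<And>d. d \<in> D \<Longrightarrow> (word_weight \<alpha> \<beta> has_sum m d) (W d)"
  shows "(word_weight \<alpha> \<beta> has_sum (\<Sum>d\<in>D. \<alpha> d * m d)) ((\<lambda>(d, w). Inl d # w) ` Sigma D W)"
proof -
  have "((\<lambda>(d, w). \<alpha> d * word_weight \<alpha> \<beta> w) has_sum (\<Sum>d\<in>D. \<alpha> d * m d)) (Sigma D W)"
    by (rule has_sum_Sigma_nonneg[where g = "\<lambda>d. \<alpha> d * m d"])
      (use has_sum_cmult_right[OF W] \<open>finite D\<close> word_weight_nonneg[of \<alpha> \<beta>] nonneg in
        \<open>auto intro: has_sum_finite\<close>)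
  moreover have "inj_on (\<lambda>(d, w). Inl d # w) (Sigma D W)" by (auto simp: inj_on_def)
  ultimately show ?thesis
    by (subst has_sum_reindex) (simp_all add: o_def case_prod_unfold)
qed

lemma has_sum_tail_words_decomp:
  assumes nonneg: "\<And>c. \<alpha> c \<ge> 0" "\<And>s. \<beta> s \<ge> 0"
    and free: "(word_weight \<alpha> \<beta> has_sum f) (lists (free_letters E C))"
    and ends: "(word_weight \<alpha> \<beta> has_sum e) ((\<lambda>s. [Inr s]) ` (- srv_of E C))"
    and branches: "(word_weight \<alpha> \<beta> has_sum b)
      ((\<lambda>(d, w). Inl d # w) ` Sigma (- C) (\<lambda>d. tail_words E (insert d C)))"
  shows "(word_weight \<alpha> \<beta> has_sum f * e + f * b) (tail_words E C)"
proof -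
  let ?A = "free_letters E C"
  let ?ends = "(\<lambda>s. [Inr s]) ` (- srv_of E C)"
  let ?branches = "(\<lambda>(d, w). Inl d # w) ` Sigma (- C) (\<lambda>d. tail_words E (insert d C))"
  have "inj_on (\<lambda>(u, v). u @ v) (lists ?A \<times> ?ends)"
    by (rule inj_on_append_same_length[where n = 1]) auto
  with nonneg free ends have split_ends:
    "(word_weight \<alpha> \<beta> has_sum f * e) ((\<lambda>(u, v). u @ v) ` (lists ?A \<times> ?ends))"
    by (rule has_sum_word_weight_append)
  have "inj_on (\<lambda>(u, v). u @ v) (lists ?A \<times> ?branches)"
    by (rule inj_on_append_lists) (auto simp: free_letters_def)
  with nonneg free branches have split_branches:
    "(word_weight \<alpha> \<beta> has_sum f * b) ((\<lambda>(u, v). u @ v) ` (lists ?A \<times> ?branches))"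
    by (rule has_sum_word_weight_append)
  have ends_free: "(\<lambda>(u, v). u @ v) ` (lists ?A \<times> ?ends) \<subseteq> lists ?A"
    by (auto simp: free_letters_def)
  have branches_not_free: "z \<notin> lists ?A" if "z \<in> (\<lambda>(u, v). u @ v) ` (lists ?A \<times> ?branches)" for z
  proof -
    from that obtain u d w where "z = u @ Inl d # w" "d \<notin> C" by auto
    then have "Inl d \<in> set z" "Inl d \<notin> ?A" by (auto simp: free_letters_def)
    then show ?thesis unfolding in_lists_conv_set by blast
  qed
  have "(\<lambda>(u, v). u @ v) ` (lists ?A \<times> ?ends) \<inter> (\<lambda>(u, v). u @ v) ` (lists ?A \<times> ?branches) = {}"
    using ends_free branches_not_free by (meson disjoint_iff subsetD)
  from has_sum_Un_disjoint[OF split_ends split_branches this]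
  show ?thesis unfolding tail_words_decomp[of E C] .
qed

definition mirror :: "('c + 's) list \<Rightarrow> ('s + 'c) list" where
  "mirror z = rev (map (case_sum Inr Inl) z)"

lemma mirror_mirror [simp]: "mirror (mirror z) = z"
  unfolding mirror_def by (induction z) (auto split: sum.split)

lemma word_weight_mirror: "word_weight \<beta> \<alpha> (mirror z) = word_weight \<alpha> \<beta> z"
  unfolding word_weight_def mirror_def by (induction z) (auto split: sum.split)

lemma may_precede_mirror:
  "may_precede (\<lambda>s c. E c s) (case_sum Inr Inl y) (case_sum Inr Inl x) = may_precede E x y"
  by (cases x; cases y) auto

lemma mirror_in_detailed_states:
  assumes "z \<in> detailed_states E"
  shows "mirror z \<in> detailed_states (\<lambda>s c. E c s)"
proof (cases "z = []")
  case False
  with assms have "isl (hd z)" "\<not> isl (last z)" "sorted_wrt (may_precede E) z"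
    by (auto simp: detailed_states_sorted_wrt)
  with False show ?thesis
    by (auto simp: detailed_states_sorted_wrt mirror_def sorted_wrt_rev sorted_wrt_map
        may_precede_mirror hd_rev last_map last_rev hd_map split: sum.split)
qed (simp add: mirror_def detailed_states_def)

lemma bij_betw_mirror_detailed_states:
  "bij_betw mirror (detailed_states E) (detailed_states (\<lambda>s c. E c s))"
  by (rule bij_betw_byWitness[where f' = mirror])
    (use mirror_in_detailed_states[of _ E] mirror_in_detailed_states[of _ "\<lambda>s c. E c s"] in auto)

section \<open>The total weight of the detailed states\<close>

locale customer_pooling =
  fixes E :: "'c::finite \<Rightarrow> 's::finite \<Rightarrow> bool" and \<alpha> :: "'c \<Rightarrow> real" and \<beta> :: "'s \<Rightarrow> real"
  assumes \<alpha>_nonneg: "\<And>c. \<alpha> c \<ge> 0" and \<beta>_nonneg: "\<And>s. \<beta> s \<ge> 0"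
    and \<alpha>_sum: "sum \<alpha> UNIV = 1" and \<beta>_sum: "sum \<beta> UNIV = 1"
    and srv_of_UNIV: "srv_of E UNIV = UNIV"
    and pooling: "\<And>C. C \<noteq> {} \<Longrightarrow> C \<noteq> UNIV \<Longrightarrow> sum \<alpha> C < sum \<beta> (srv_of E C)"
begin

definition gap :: "'c set \<Rightarrow> real" where
  "gap C = sum \<beta> (srv_of E C) - sum \<alpha> C"

lemma gap_pos: "C \<noteq> {} \<Longrightarrow> C \<noteq> UNIV \<Longrightarrow> gap C > 0"
  using pooling by (simp add: gap_def)

definition order_mass :: "'c set \<Rightarrow> real" where
  "order_mass C = prod \<alpha> (- C) *
     (\<Sum>xs\<in>compl_orderings C. \<Prod>l<length xs. inverse (gap (C \<union> set (take l xs))))"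

lemma order_mass_UNIV: "order_mass UNIV = 1"
  by (simp add: order_mass_def compl_orderings_UNIV)

lemma order_mass_insert:
  assumes "C \<noteq> UNIV"
  shows "order_mass C = (\<Sum>d\<in>- C. \<alpha> d * order_mass (insert d C)) / gap C"
proof -
  let ?S = "\<lambda>C. \<Sum>xs\<in>compl_orderings C. \<Prod>l<length xs. inverse (gap (C \<union> set (take l xs)))"
  have "?S C = inverse (gap C) * (\<Sum>d\<in>- C. ?S (insert d C))"
    unfolding sum_compl_orderings_Cons[OF assms] prod_prefixes_Cons[where f = "\<lambda>X. inverse (gap X)"]
    by (simp add: sum_distrib_left)
  then have "order_mass C = inverse (gap C) * (\<Sum>d\<in>- C. prod \<alpha> (- C) * ?S (insert d C))"
    unfolding order_mass_def by (simp add: sum_distrib_left mult_ac)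
  also have "\<dots> = inverse (gap C) * (\<Sum>d\<in>- C. \<alpha> d * order_mass (insert d C))"
    by (intro arg_cong[where f = "(*) _"] sum.cong) (simp_all add: order_mass_def Compl_insert prod.remove)
  finally show ?thesis by (simp add: divide_inverse mult.commute)
qed

lemma has_sum_free_words:
  assumes "C \<noteq> {}" "C \<noteq> UNIV"
  shows "(word_weight \<alpha> \<beta> has_sum 1 / gap C) (lists (free_letters E C))"
proof -
  have "sum (case_sum \<alpha> \<beta>) (free_letters E C) = sum \<alpha> C + sum \<beta> (- srv_of E C)"
    unfolding free_letters_def by (subst sum.union_disjoint) (auto simp: sum.reindex)
  then have weight: "1 - sum (case_sum \<alpha> \<beta>) (free_letters E C) = gap C"
    by (simp add: gap_def sum_Compl_eq[OF \<beta>_sum])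
  moreover have "gap C > 0" using assms by (rule gap_pos)
  ultimately have "((\<lambda>u. prod_list (map (case_sum \<alpha> \<beta>) u)) has_sum 1 / gap C) (lists (free_letters E C))"
    using has_sum_prod_list_lists[of "free_letters E C" "case_sum \<alpha> \<beta>"] \<alpha>_nonneg \<beta>_nonneg
    by (auto split: sum.splits)
  then show ?thesis unfolding word_weight_def[abs_def] .
qed

lemma has_sum_tail_words_step:
  assumes "C \<noteq> {}" "C \<noteq> UNIV"
    and IH: "\<And>d. d \<notin> C \<Longrightarrow> (word_weight \<alpha> \<beta> has_sum order_mass (insert d C) - 1) (tail_words E (insert d C))"
  shows "(word_weight \<alpha> \<beta> has_sum order_mass C - 1) (tail_words E C)"
proof -
  let ?T = "\<Sum>d\<in>- C. \<alpha> d * (order_mass (insert d C) - 1)"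
  have "(word_weight \<alpha> \<beta> has_sum sum \<beta> (- srv_of E C)) ((\<lambda>s. [Inr s]) ` (- srv_of E C))"
    by (subst has_sum_reindex) (simp_all add: inj_on_def o_def has_sum_finite)
  then have ends: "(word_weight \<alpha> \<beta> has_sum 1 - sum \<beta> (srv_of E C)) ((\<lambda>s. [Inr s]) ` (- srv_of E C))"
    by (simp add: sum_Compl_eq[OF \<beta>_sum])
  have branches: "(word_weight \<alpha> \<beta> has_sum ?T)
      ((\<lambda>(d, w). Inl d # w) ` Sigma (- C) (\<lambda>d. tail_words E (insert d C)))"
    using IH by (intro has_sum_word_weight_Inl_Cons \<alpha>_nonneg \<beta>_nonneg) auto
  have "(word_weight \<alpha> \<beta> has_sum 1 / gap C * (1 - sum \<beta> (srv_of E C)) + 1 / gap C * ?T) (tail_words E C)"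
    using \<alpha>_nonneg \<beta>_nonneg has_sum_free_words[OF assms(1,2)] ends branches
    by (rule has_sum_tail_words_decomp)
  moreover have "1 / gap C * (1 - sum \<beta> (srv_of E C)) + 1 / gap C * ?T = order_mass C - 1"
  proof -
    have "?T = (\<Sum>d\<in>- C. \<alpha> d * order_mass (insert d C)) - (1 - sum \<alpha> C)"
      by (simp add: right_diff_distrib sum_subtractf sum_Compl_eq[OF \<alpha>_sum])
    then have "(1 - sum \<beta> (srv_of E C)) + ?T = (\<Sum>d\<in>- C. \<alpha> d * order_mass (insert d C)) - gap C"
      by (simp add: gap_def)
    moreover have "gap C \<noteq> 0" using gap_pos[OF assms(1,2)] by simp
    ultimately have "1 / gap C * ((1 - sum \<beta> (srv_of E C)) + ?T)
        = (\<Sum>d\<in>- C. \<alpha> d * order_mass (insert d C)) / gap C - 1"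
      by (simp add: field_simps)
    then show ?thesis
      by (simp only: order_mass_insert[OF assms(2)] distrib_left)
  qed
  ultimately show ?thesis by simp
qed

lemma has_sum_tail_words:
  "C \<noteq> {} \<Longrightarrow> (word_weight \<alpha> \<beta> has_sum order_mass C - 1) (tail_words E C)"
proof (induction "card (- C)" arbitrary: C rule: less_induct)
  case less
  show ?case
  proof (cases "C = UNIV")
    case True
    then show ?thesis by (simp add: tail_words_UNIV srv_of_UNIV order_mass_UNIV)
  next
    case False
    show ?thesis
    proof (rule has_sum_tail_words_step[OF less.prems False])
      fix d assume "d \<notin> C"
      then have "card (- insert d C) < card (- C)"
        by (metis Compl_insert card_Diff1_less finite ComplI)
      then show "(word_weight \<alpha> \<beta> has_sum order_mass (insert d C) - 1) (tail_words E (insert d C))"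
        by (intro less.hyps) auto
    qed
  qed
qed

lemma has_sum_detailed_states:
  "(word_weight \<alpha> \<beta> has_sum (\<Sum>c\<in>UNIV. \<alpha> c * order_mass {c})) (detailed_states E)"
proof -
  have "[] \<notin> (\<lambda>(c, w). Inl c # w) ` Sigma UNIV (\<lambda>c. tail_words E {c})" by auto
  moreover have "(word_weight \<alpha> \<beta> has_sum (\<Sum>c\<in>UNIV. \<alpha> c * (order_mass {c} - 1)))
      ((\<lambda>(c, w). Inl c # w) ` Sigma UNIV (\<lambda>c. tail_words E {c}))"
    by (intro has_sum_word_weight_Inl_Cons \<alpha>_nonneg \<beta>_nonneg has_sum_tail_words) auto
  ultimately have "(word_weight \<alpha> \<beta> has_sum 1 + (\<Sum>c\<in>UNIV. \<alpha> c * (order_mass {c} - 1))) (detailed_states E)"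
    using has_sum_insert by (fastforce simp: detailed_states_eq_Cons_tail_words)
  moreover have "1 + (\<Sum>c\<in>UNIV. \<alpha> c * (order_mass {c} - 1)) = (\<Sum>c\<in>UNIV. \<alpha> c * order_mass {c})"
    by (simp add: right_diff_distrib sum_subtractf \<alpha>_sum)
  ultimately show ?thesis by simp
qed

lemma sum_order_mass_singletons:
  "(\<Sum>c\<in>UNIV. \<alpha> c * order_mass {c})
     = prod \<alpha> UNIV * (\<Sum>xs\<in>orderings. \<Prod>l\<in>{1..<CARD('c)}. inverse (gap (set (take l xs))))"
proof -
  have "\<alpha> c * prod \<alpha> (- {c}) = prod \<alpha> UNIV" for c
    by (simp add: Compl_eq_Diff_UNIV prod.remove)
  then show ?thesis
    unfolding sum_orderings_Cons[where f = "\<lambda>X. inverse (gap X)"] order_mass_def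
    by (simp add: sum_distrib_left flip: mult.assoc)
qed

lemma infsum_detailed_states:
  "infsum (word_weight \<alpha> \<beta>) (detailed_states E)
     = prod \<alpha> UNIV * (\<Sum>xs\<in>orderings. \<Prod>l\<in>{1..<CARD('c)}. inverse (gap (set (take l xs))))"
  using has_sum_detailed_states by (simp add: infsumI sum_order_mass_singletons)

end

section \<open>Complete resource pooling\<close>

lemma bip_connected_neighbours:
  assumes "bip_connected E"
  shows bip_connected_customer_neighbour: "\<exists>s. E c s"
    and bip_connected_server_neighbour: "\<exists>c. E c s"
proof -
  have "(Inl c, Inr s) \<in> (bip_edges E)\<^sup>*" "(Inr s, Inl c) \<in> (bip_edges E)\<^sup>*"
    using assms unfolding bip_connected_def by blast+
  then show "\<exists>s. E c s" "\<exists>c. E c s"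
    by (auto elim: converse_rtranclE simp: bip_edges_def)
qed

lemma complete_resource_poolingD:
  "complete_resource_pooling E \<alpha> \<beta> \<Longrightarrow> S \<noteq> {} \<Longrightarrow> S \<noteq> UNIV \<Longrightarrow> sum \<beta> S > sum \<alpha> (only_cst E S)"
  unfolding complete_resource_pooling_def by simp

lemma srv_of_flip: "srv_of (\<lambda>s c. E c s) T = cst_of E T"
  by (auto simp: srv_of_def cst_of_def)

lemma only_cst_Compl: "only_cst E (- T) = - cst_of E T"
  by (auto simp: only_cst_def)

lemma flip_gap_eq:
  fixes \<alpha> :: "'c::finite \<Rightarrow> real" and \<beta> :: "'s::finite \<Rightarrow> real"
  assumes "sum \<alpha> UNIV = 1" "sum \<beta> UNIV = 1"
  shows "sum \<alpha> (srv_of (\<lambda>s c. E c s) T) - sum \<beta> T = sum \<beta> (- T) - sum \<alpha> (only_cst E (- T))"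
  using assms by (simp add: srv_of_flip only_cst_Compl sum_Compl_eq)

lemma crp_imp_customer_pooling_flip:
  fixes E :: "'c::finite \<Rightarrow> 's::finite \<Rightarrow> bool"
  assumes "bip_connected E"
    and "\<And>c. \<alpha> c > 0" "sum \<alpha> UNIV = 1" "\<And>s. \<beta> s > 0" "sum \<beta> UNIV = 1"
    and "complete_resource_pooling E \<alpha> \<beta>"
  shows "customer_pooling (\<lambda>s c. E c s) \<beta> \<alpha>"
proof
  show "srv_of (\<lambda>s c. E c s) UNIV = UNIV"
    using bip_connected_customer_neighbour[OF assms(1)] by (auto simp: srv_of_def)
  fix T :: "'s set" assume "T \<noteq> {}" "T \<noteq> UNIV"
  then have "- T \<noteq> {}" "- T \<noteq> UNIV"
    using compl_eq_compl_iff[of T UNIV] compl_eq_compl_iff[of T "{}"] by simp_all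
  then have "sum \<beta> (- T) > sum \<alpha> (only_cst E (- T))"
    by (rule complete_resource_poolingD[OF assms(6)])
  then show "sum \<beta> T < sum \<alpha> (srv_of (\<lambda>s c. E c s) T)"
    using flip_gap_eq[OF assms(3,5), of E T] by linarith
qed (use assms in \<open>auto intro: less_imp_le\<close>)

lemma crp_imp_customer_pooling:
  fixes E :: "'c::finite \<Rightarrow> 's::finite \<Rightarrow> bool"
  assumes "bip_connected E"
    and \<alpha>_pos: "\<And>c. \<alpha> c > 0" and "sum \<alpha> UNIV = 1" "\<And>s. \<beta> s > 0" "sum \<beta> UNIV = 1"
    and crp: "complete_resource_pooling E \<alpha> \<beta>"
  shows "customer_pooling E \<alpha> \<beta>"
proof
  show "srv_of E UNIV = UNIV"
    using bip_connected_server_neighbour[OF assms(1)] by (auto simp: srv_of_def)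
  fix C :: "'c set" assume C: "C \<noteq> {}" "C \<noteq> UNIV"
  show "sum \<alpha> C < sum \<beta> (srv_of E C)"
  proof (cases "srv_of E C = UNIV")
    case True
    have "sum \<alpha> (- C) > 0" using C \<alpha>_pos by (intro sum_pos) auto
    then show ?thesis using True assms(3,5) by (simp add: sum_Compl_eq)
  next
    case False
    from C obtain c where "c \<in> C" by blast
    moreover obtain s where "E c s" using bip_connected_customer_neighbour[OF assms(1)] by blast
    ultimately have "srv_of E C \<noteq> {}" by (auto simp: srv_of_def)
    have "C \<subseteq> only_cst E (srv_of E C)"
      by (auto simp: only_cst_def cst_of_def srv_of_def)
    then have "sum \<alpha> C \<le> sum \<alpha> (only_cst E (srv_of E C))"
      using \<alpha>_pos by (intro sum_mono2) (auto intro: less_imp_le)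
    then show ?thesis
      using complete_resource_poolingD[OF crp \<open>srv_of E C \<noteq> {}\<close> False] by simp
  qed
qed (use assms in \<open>auto intro: less_imp_le\<close>)

theorem theorem5p3:
  fixes E :: "'c::finite \<Rightarrow> 's::finite \<Rightarrow> bool"
    and \<alpha> :: "'c \<Rightarrow> real" and \<beta> :: "'s \<Rightarrow> real"
  assumes conn: "bip_connected E"
    and \<alpha>_pos: "\<And>c. \<alpha> c > 0" and \<alpha>_sum: "sum \<alpha> UNIV = 1"
    and \<beta>_pos: "\<And>s. \<beta> s > 0" and \<beta>_sum: "sum \<beta> UNIV = 1"
    and crp: "complete_resource_pooling E \<alpha> \<beta>"
  shows "norm_const E \<alpha> \<beta> =
           inverse ((\<Prod>s\<in>UNIV. \<beta> s) *
             (\<Sum>xs\<in>orderings. \<Prod>l\<in>{1..<CARD('s)}.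
                inverse (sum \<beta> (set (take l xs)) - sum \<alpha> (only_cst E (set (take l xs))))))
       \<and> norm_const E \<alpha> \<beta> =
           inverse ((\<Prod>c\<in>UNIV. \<alpha> c) *
             (\<Sum>xs\<in>orderings. \<Prod>l\<in>{1..<CARD('c)}.
                inverse (sum \<beta> (srv_of E (set (take l xs))) - sum \<alpha> (set (take l xs)))))"
proof
  interpret servers: customer_pooling "\<lambda>s c. E c s" \<beta> \<alpha>
    using crp_imp_customer_pooling_flip[OF assms] .
  have "infsum (word_weight \<alpha> \<beta>) (detailed_states E)
      = infsum (word_weight \<beta> \<alpha>) (detailed_states (\<lambda>s c. E c s))"
    using infsum_reindex_bij_betw[OF bij_betw_mirror_detailed_states, of "word_weight \<beta> \<alpha>" E]
    by (simp add: word_weight_mirror)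
  then show "norm_const E \<alpha> \<beta> = inverse ((\<Prod>s\<in>UNIV. \<beta> s) *
      (\<Sum>xs\<in>orderings. \<Prod>l\<in>{1..<CARD('s)}.
         inverse (sum \<beta> (set (take l xs)) - sum \<alpha> (only_cst E (set (take l xs))))))"
    using sum_orderings_compl_prefixes[where f = "\<lambda>T. inverse (sum \<beta> (- T) - sum \<alpha> (only_cst E (- T)))"]
    by (simp add: norm_const_def servers.infsum_detailed_states servers.gap_def flip_gap_eq \<alpha>_sum \<beta>_sum)
next
  interpret customers: customer_pooling E \<alpha> \<beta>
    using crp_imp_customer_pooling[OF assms] .
  show "norm_const E \<alpha> \<beta> = inverse ((\<Prod>c\<in>UNIV. \<alpha> c) *
      (\<Sum>xs\<in>orderings. \<Prod>l\<in>{1..<CARD('c)}.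
         inverse (sum \<beta> (srv_of E (set (take l xs))) - sum \<alpha> (set (take l xs)))))"
    by (simp add: norm_const_def customers.infsum_detailed_states customers.gap_def)
qed

end
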